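(* Let $\mathbb{F}$ be a free group on a finite basis $X$, $\pi:\mathbb{F}\twoheadrightarrow\Gamma$ an epimorphism, and suppose $\Gamma$ is stable with respect to $\pi$ and $\ker\pi$ is nontrivial. Then there exist $C_1,C_2>0$ such that for all $x\ge C_1$: (i) if $\delta>0$ is such that there exists a finite $E\subseteq\ker\pi$ for which every $(\delta,E)$-almost-solution is $x^{-1}$-close to a solution for $\ker\pi$, then $\delta\le C_2x^{-1}$; (ii) $F_\Gamma^\pi(x)\ge x/4$.
   Context: For a finite set $\Omega$, $d_\Omega(\sigma,\tau)=|\{\omega:\sigma(\omega)\ne\tau(\omega)\}|/|\Omega|$. For $E\subseteq\mathbb{F}$, a homomorphism $\phi:\mathbb{F}\to\mathrm{Sym}(\Omega)$ ($\Omega$ finite) is a solution for $E$ if $E\subseteq\ker\phi$, and a $(\delta,E)$-almost-solution if $d_\Omega(\phi(r),\mathrm{id}_\Omega)<\delta$ for all $r\in E$. Homomorphisms $\rho,\phi:\mathbb{F}\to\mathrm{Sym}(\Omega)$ are $\epsilon$-close if $d_\Omega(\rho(x),\phi(x))<\epsilon$ for all $x\in X$. $\Gamma$ is stable w.r.t. $\pi$ if for every $\epsilon>0$ there exist $\delta\in(0,1]$ and finite $E\subseteq\ker\pi$ (a valid pair for $\epsilon$) such that every $(\delta,E)$-almost-solution is $\epsilon$-close to a solution for $\ker\pi$. With $\|E\|=\sum_{r\in E}|r|$ (word length in $X$), $F_\Gamma^\pi(x)=\inf\{\|E\|/\delta\}$ over valid pairs for $\epsilon=1/x$. *)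

theory Defs
  imports Complex_Main "HOL-Algebra.Algebra"
begin

text \<open>A letter is a pair (x, b): b = False means the generator x, b = True means its inverse.\<close>

fun red_cons :: "'a \<times> bool \<Rightarrow> ('a \<times> bool) list \<Rightarrow> ('a \<times> bool) list" where
  "red_cons a [] = [a]"
| "red_cons a (b # bs) = (if fst a = fst b \<and> snd a \<noteq> snd b then bs else a # b # bs)"

definition reduce :: "('a \<times> bool) list \<Rightarrow> ('a \<times> bool) list" where
  "reduce ws = foldr red_cons ws []"

fun reduced :: "('a \<times> bool) list \<Rightarrow> bool" where
  "reduced [] = True"
| "reduced [a] = True"
| "reduced (a # b # bs) = (\<not> (fst a = fst b \<and> snd a \<noteq> snd b) \<and> reduced (b # bs))"

definition free_group :: "'a set \<Rightarrow> ('a \<times> bool) list monoid" where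
  "free_group B = \<lparr>carrier = {w. fst ` set w \<subseteq> B \<and> reduced w},
                   monoid.mult = (\<lambda>u v. reduce (u @ v)),
                   one = []\<rparr>"

definition gen :: "'a \<Rightarrow> ('a \<times> bool) list" where
  "gen x = [(x, False)]"

definition hdist :: "nat set \<Rightarrow> (nat \<Rightarrow> nat) \<Rightarrow> (nat \<Rightarrow> nat) \<Rightarrow> real" where
  "hdist \<Omega> \<sigma> \<tau> = real (card {\<omega> \<in> \<Omega>. \<sigma> \<omega> \<noteq> \<tau> \<omega>}) / real (card \<Omega>)"

text \<open>Homomorphisms F \<rightarrow> Sym(\<Omega>), \<Omega> a finite set (taken inside nat, w.l.o.g.).\<close>

definition sym_hom :: "'a set \<Rightarrow> nat set \<Rightarrow> (('a \<times> bool) list \<Rightarrow> (nat \<Rightarrow> nat)) \<Rightarrow> bool" where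
  "sym_hom B \<Omega> \<phi> \<longleftrightarrow> finite \<Omega> \<and> \<phi> \<in> hom (free_group B) (BijGroup \<Omega>)"

definition is_solution :: "'a set \<Rightarrow> nat set \<Rightarrow> ('a \<times> bool) list set \<Rightarrow> (('a \<times> bool) list \<Rightarrow> (nat \<Rightarrow> nat)) \<Rightarrow> bool" where
  "is_solution B \<Omega> E \<phi> \<longleftrightarrow> E \<subseteq> kernel (free_group B) (BijGroup \<Omega>) \<phi>"

definition almost_solution :: "'a set \<Rightarrow> nat set \<Rightarrow> real \<Rightarrow> ('a \<times> bool) list set \<Rightarrow> (('a \<times> bool) list \<Rightarrow> (nat \<Rightarrow> nat)) \<Rightarrow> bool" where
  "almost_solution B \<Omega> \<delta> E \<phi> \<longleftrightarrow> (\<forall>r\<in>E. hdist \<Omega> (\<phi> r) (\<one>\<^bsub>BijGroup \<Omega>\<^esub>) < \<delta>)"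

definition eps_close :: "'a set \<Rightarrow> nat set \<Rightarrow> real \<Rightarrow> (('a \<times> bool) list \<Rightarrow> (nat \<Rightarrow> nat)) \<Rightarrow> (('a \<times> bool) list \<Rightarrow> (nat \<Rightarrow> nat)) \<Rightarrow> bool" where
  "eps_close B \<Omega> \<epsilon> \<rho> \<phi> \<longleftrightarrow> (\<forall>x\<in>B. hdist \<Omega> (\<rho> (gen x)) (\<phi> (gen x)) < \<epsilon>)"

definition stab_property :: "'a set \<Rightarrow> ('a \<times> bool) list set \<Rightarrow> real \<Rightarrow> real \<Rightarrow> ('a \<times> bool) list set \<Rightarrow> bool" where
  "stab_property B K \<epsilon> \<delta> E \<longleftrightarrow>
     (\<forall>\<Omega> \<phi>. sym_hom B \<Omega> \<phi> \<and> almost_solution B \<Omega> \<delta> E \<phi> \<longrightarrow>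
        (\<exists>\<psi>. sym_hom B \<Omega> \<psi> \<and> is_solution B \<Omega> K \<psi> \<and> eps_close B \<Omega> \<epsilon> \<psi> \<phi>))"

definition valid_pair :: "'a set \<Rightarrow> ('a \<times> bool) list set \<Rightarrow> real \<Rightarrow> real \<Rightarrow> ('a \<times> bool) list set \<Rightarrow> bool" where
  "valid_pair B K \<epsilon> \<delta> E \<longleftrightarrow> 0 < \<delta> \<and> \<delta> \<le> 1 \<and> finite E \<and> E \<subseteq> K \<and> stab_property B K \<epsilon> \<delta> E"

definition stable :: "'a set \<Rightarrow> ('a \<times> bool) list set \<Rightarrow> bool" where
  "stable B K \<longleftrightarrow> (\<forall>\<epsilon>>0. \<exists>\<delta> E. valid_pair B K \<epsilon> \<delta> E)"

definition word_norm :: "('a \<times> bool) list set \<Rightarrow> real" where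
  "word_norm E = (\<Sum>r\<in>E. real (length r))"

definition stability_function :: "'a set \<Rightarrow> ('a \<times> bool) list set \<Rightarrow> real \<Rightarrow> real" where
  "stability_function B K x = Inf {word_norm E / \<delta> | \<delta> E. valid_pair B K (1 / x) \<delta> E}"

end

(*
  Let w be a nontrivial reduced word in ker pi. Reading w backwards along the path 0, 1, ..., |w|
  gives permutations of {0..|w|} for the generators under which w moves a point, and the left
  regular action of the permutation group of that set turns this into an action on N points in
  which w has no fixed point. Padding with fixed points up to n ~ N / (|w| eps) points yields a
  homomorphism phi into Sym(n) in which every word moves fewer than 2 |w| eps n points, so phi
  is a (delta, E)-almost-solution for every E as soon as delta > 2 |w| eps. By bi-invariance of
  the Hamming distance, a solution psi that is eps-close to phi on the generators is
  |w| eps-close to it on w; but psi(w) = id while phi(w) moves N >= |w| eps n points. Hence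
  delta <= 2 |w| eps for every valid pair, which is (i) for a fixed w, and applied to a
  nontrivial relator of E it gives ||E|| / delta >= x / 2, which is (ii).
*)

theory Submission
  imports Defs "HOL-Combinatorics.Permutations"
begin

definition letter_perm :: "('a \<Rightarrow> 'c \<Rightarrow> 'c) \<Rightarrow> 'a \<times> bool \<Rightarrow> 'c \<Rightarrow> 'c" where
  "letter_perm p l = (if snd l then inv_into UNIV (p (fst l)) else p (fst l))"

fun word_perm :: "('a \<Rightarrow> 'c \<Rightarrow> 'c) \<Rightarrow> ('a \<times> bool) list \<Rightarrow> 'c \<Rightarrow> 'c" where
  "word_perm p [] = id"
| "word_perm p (l # ls) = letter_perm p l \<circ> word_perm p ls"

lemma word_perm_append: "word_perm p (u @ v) = word_perm p u \<circ> word_perm p v"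
  by (induction u) (auto simp: o_assoc)

lemma letter_perm_cancel:
  assumes "bij (p g)"
  shows "letter_perm p (g, b) \<circ> letter_perm p (g, \<not> b) = id"
  using assms by (cases b) (auto simp: letter_perm_def fun_eq_iff bij_is_inj bij_is_surj surj_f_inv_f)

lemma word_perm_red_cons:
  assumes "\<And>g. bij (p g)"
  shows "word_perm p (red_cons a ws) = word_perm p (a # ws)"
proof (cases ws)
  case (Cons b bs)
  show ?thesis
  proof (cases "fst a = fst b \<and> snd a \<noteq> snd b")
    case True
    then have "letter_perm p a \<circ> letter_perm p b = id"
      using letter_perm_cancel[of p "fst a" "snd a", OF assms] by (cases a, cases b) auto
    then show ?thesis using Cons True by (simp add: comp_assoc[symmetric])
  qed (use Cons in auto)
qed simp

lemma word_perm_reduce: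
  assumes "\<And>g. bij (p g)"
  shows "word_perm p (reduce ws) = word_perm p ws"
  by (induction ws) (simp_all add: reduce_def word_perm_red_cons[OF assms])

lemma word_perm_permutes: "(\<And>g. p g permutes S) \<Longrightarrow> word_perm p w permutes S"
  by (induction w) (auto simp: letter_perm_def intro: permutes_compose permutes_inv permutes_id)

lemma word_perm_walk_down:
  assumes "\<And>j. j < length w \<Longrightarrow> letter_perm p (w ! j) (Suc (j + a)) = j + a"
  shows "word_perm p w (length w + a) = a"
  using assms
proof (induction w arbitrary: a)
  case (Cons l u)
  have "word_perm p u (length u + Suc a) = Suc a"
    using Cons.prems[of "Suc _"] by (intro Cons.IH) auto
  then show ?case using Cons.prems[of 0] by simp
qed simp

section \<open>Fixed-point-free actions of reduced words\<close>

lemma word_perm_transport: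
  fixes p :: "'a \<Rightarrow> 'c \<Rightarrow> 'c" and f :: "'c \<Rightarrow> 'd"
  assumes p: "\<And>g. p g permutes A" and f: "bij_betw f A B"
  obtains P where "\<And>g. P g permutes B"
    and "\<And>w a. a \<in> A \<Longrightarrow> word_perm P w (f a) = f (word_perm p w a)"
proof
  define P where "P g y = (if y \<in> B then f (p g (inv_into A f y)) else y)" for g y
  show P: "P g permutes B" for g
    unfolding P_def by (rule permutes_bij_inv_into[OF p f])
  have P_f: "P g (f a) = f (p g a)" if "a \<in> A" for g a
    using that f by (auto simp: P_def bij_betw_def inv_into_f_f)
  have "inv_into UNIV (P g) (f a) = f (inv_into UNIV (p g) a)" if "a \<in> A" for g a
    using that p[of g] by (simp add: permutes_inv_eq[OF P] P_f permutes_in_image permutes_inv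
        permutes_inverses)
  then have letter: "letter_perm P l (f a) = f (letter_perm p l a)" if "a \<in> A" for l a
    using that by (simp add: letter_perm_def P_f)
  show "word_perm P w (f a) = f (word_perm p w a)" if "a \<in> A" for w a
    using that
    by (induction w) (simp_all add: letter permutes_in_image[OF word_perm_permutes[OF p]])
qed

lemma word_perm_left_compose:
  assumes q: "\<And>g. q g permutes T"
  obtains L where "\<And>g. L g permutes {\<sigma>. \<sigma> permutes T}"
    and "\<And>w \<sigma>. \<sigma> permutes T \<Longrightarrow> word_perm L w \<sigma> = word_perm q w \<circ> \<sigma>"
proof
  define L where "L g \<sigma> = (if \<sigma> permutes T then q g \<circ> \<sigma> else \<sigma>)" for g \<sigma>
  show L: "L g permutes {\<sigma>. \<sigma> permutes T}" for g
  proof (rule bij_imp_permutes)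
    show "bij_betw (L g) {\<sigma>. \<sigma> permutes T} {\<sigma>. \<sigma> permutes T}"
      by (rule bij_betw_byWitness[where f' = "\<lambda>\<sigma>. inv_into UNIV (q g) \<circ> \<sigma>"])
        (auto simp: L_def o_assoc permutes_inv_o[OF q] intro: permutes_compose permutes_inv q)
  qed (simp add: L_def)
  have "inv_into UNIV (L g) \<sigma> = inv_into UNIV (q g) \<circ> \<sigma>" if "\<sigma> permutes T" for g \<sigma>
    using that q[of g] by (simp add: permutes_inv_eq[OF L] L_def o_assoc permutes_inv_o
        permutes_compose permutes_inv)
  then have letter: "letter_perm L l \<sigma> = letter_perm q l \<circ> \<sigma>" if "\<sigma> permutes T" for l \<sigma>
    using that by (simp add: letter_perm_def L_def)
  show "word_perm L w \<sigma> = word_perm q w \<circ> \<sigma>" if "\<sigma> permutes T" for w \<sigma>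
    using that by (induction w) (simp_all add: letter o_assoc permutes_compose word_perm_permutes q)
qed

(* In the left regular action of Sym(T), a word that moves a point of T moves every permutation. *)
lemma ex_fixpoint_free_perms:
  fixes q :: "'a \<Rightarrow> 'c \<Rightarrow> 'c"
  assumes q: "\<And>g. q g permutes T" and "finite T" and moved: "word_perm q w m \<noteq> m"
  obtains N and P :: "'a \<Rightarrow> nat \<Rightarrow> nat"
  where "N \<ge> 1" "\<And>g. P g permutes {0..<N}" "\<And>i. i < N \<Longrightarrow> word_perm P w i \<noteq> i"
proof -
  define S where "S = {\<sigma>. \<sigma> permutes T}"
  obtain L where L: "\<And>g. L g permutes S"
    and L_word: "\<And>w \<sigma>. \<sigma> permutes T \<Longrightarrow> word_perm L w \<sigma> = word_perm q w \<circ> \<sigma>"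
    using word_perm_left_compose[of q T, OF q] unfolding S_def by blast
  have "finite S" unfolding S_def using \<open>finite T\<close> by (rule finite_permutations)
  then obtain h where h: "bij_betw h S {0..<card S}"
    using ex_bij_betw_finite_nat by blast
  obtain P where P: "\<And>g. P g permutes {0..<card S}"
    and P_word: "\<And>w \<sigma>. \<sigma> \<in> S \<Longrightarrow> word_perm P w (h \<sigma>) = h (word_perm L w \<sigma>)"
    using word_perm_transport[where p = L and A = S and f = h, OF L h] by blast
  have "id \<in> S" by (simp add: S_def permutes_id)
  then have "card S \<ge> 1"
    using \<open>finite S\<close> by (auto simp: Suc_le_eq card_gt_0_iff)
  moreover have "word_perm P w i \<noteq> i" if "i < card S" for i
  proof
    assume fixed: "word_perm P w i = i"
    have "i \<in> h ` S" using h that by (simp add: bij_betw_def)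
    then obtain \<sigma> where \<sigma>: "\<sigma> \<in> S" "i = h \<sigma>" by blast
    have "word_perm L w \<sigma> \<in> S"
      using permutes_in_image[OF word_perm_permutes[where p = L, OF L]] \<sigma>(1) by simp
    moreover have "h (word_perm L w \<sigma>) = h \<sigma>" using fixed \<sigma> P_word by simp
    ultimately have "word_perm L w \<sigma> = \<sigma>"
      using inj_onD[OF bij_betw_imp_inj_on[OF h]] \<sigma>(1) by blast
    then have "word_perm q w \<circ> \<sigma> = \<sigma>" using L_word \<sigma>(1) by (simp add: S_def)
    moreover obtain x where "\<sigma> x = m"
      using permutes_surj \<sigma>(1) by (metis S_def mem_Collect_eq surj_def)
    ultimately show False using moved by (metis comp_apply)
  qed
  ultimately show thesis using P that by blast
qed

lemma ex_permutes_extending: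
  assumes "finite S" "D \<subseteq> S" "inj_on f D" "f ` D \<subseteq> S"
  obtains p where "p permutes S" "\<And>x. x \<in> D \<Longrightarrow> p x = f x"
proof -
  have "card (S - D) = card (S - f ` D)"
    using assms by (simp add: card_Diff_subset card_image finite_subset)
  then obtain b where b: "bij_betw b (S - D) (S - f ` D)"
    using assms finite_same_card_bij by (metis finite_Diff)
  define p where "p x = (if x \<in> D then f x else if x \<in> S then b x else x)" for x
  have "bij_betw p (D \<union> (S - D)) (f ` D \<union> (S - f ` D))"
  proof (rule bij_betw_combine)
    show "bij_betw p D (f ` D)"
      using assms(3) by (simp add: bij_betw_def inj_on_def p_def image_def)
    show "bij_betw p (S - D) (S - f ` D)"
      using b by (rule bij_betw_cong[THEN iffD1, rotated]) (simp add: p_def)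
  qed blast
  moreover have "D \<union> (S - D) = S" "f ` D \<union> (S - f ` D) = S" using assms by auto
  ultimately have "p permutes S" by (intro bij_imp_permutes) (auto simp: p_def)
  then show thesis using that by (simp add: p_def)
qed

lemma reduced_ConsD: "reduced (a # ws) \<Longrightarrow> reduced ws"
  by (cases ws) auto

lemma reduced_nth_no_cancel:
  "reduced w \<Longrightarrow> Suc j < length w \<Longrightarrow> w ! j = (g, b) \<Longrightarrow> w ! Suc j \<noteq> (g, \<not> b)"
  by (induction w arbitrary: j rule: reduced.induct) (auto simp: nth_Cons split: nat.splits)

(* Read from right to left, w walks from |w| down to 0, letter j stepping from j + 1 to j.
   The prescribed partial maps are injective because w is reduced. *)
lemma ex_path_perms:
  assumes "reduced w"
  obtains p :: "'a \<Rightarrow> nat \<Rightarrow> nat"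
  where "\<And>g. p g permutes {0..length w}"
    and "\<And>j. j < length w \<Longrightarrow> letter_perm p (w ! j) (Suc j) = j"
proof -
  have "\<exists>q. q permutes {0..length w} \<and>
      (\<forall>j<length w. (w ! j = (g, False) \<longrightarrow> q (Suc j) = j) \<and> (w ! j = (g, True) \<longrightarrow> q j = Suc j))"
    for g
  proof -
    define D\<^sub>1 where "D\<^sub>1 = {Suc j | j. j < length w \<and> w ! j = (g, False)}"
    define D\<^sub>2 where "D\<^sub>2 = {j. j < length w \<and> w ! j = (g, True)}"
    define f where "f x = (if x \<in> D\<^sub>1 then x - 1 else x + 1)" for x
    have no_cancel: "w ! j = (g, b) \<Longrightarrow> w ! Suc j = (g, \<not> b) \<Longrightarrow> Suc j < length w \<Longrightarrow> False"
      for j b using reduced_nth_no_cancel[OF assms] by blast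
    have f_D\<^sub>2: "f j = Suc j" if "j \<in> D\<^sub>2" for j
      using that no_cancel[of _ False] by (auto simp: f_def D\<^sub>1_def D\<^sub>2_def)
    have "inj_on f (D\<^sub>1 \<union> D\<^sub>2)"
      using no_cancel[of _ True] f_D\<^sub>2 by (auto simp: inj_on_def f_def D\<^sub>1_def D\<^sub>2_def) (metis Suc_lessD)+
    moreover have "D\<^sub>1 \<union> D\<^sub>2 \<subseteq> {0..length w}" "f ` (D\<^sub>1 \<union> D\<^sub>2) \<subseteq> {0..length w}"
      using f_D\<^sub>2 by (auto simp: f_def D\<^sub>1_def D\<^sub>2_def)
    ultimately obtain q where "q permutes {0..length w}" "\<And>x. x \<in> D\<^sub>1 \<union> D\<^sub>2 \<Longrightarrow> q x = f x"
      by (metis ex_permutes_extending finite_atLeastAtMost)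
    then show ?thesis using f_D\<^sub>2 by (auto simp: f_def D\<^sub>1_def D\<^sub>2_def)
  qed
  then obtain p where p: "\<And>g. p g permutes {0..length w}"
    and p_path: "\<And>g j. j < length w \<Longrightarrow>
      (w ! j = (g, False) \<longrightarrow> p g (Suc j) = j) \<and> (w ! j = (g, True) \<longrightarrow> p g j = Suc j)"
    by metis
  have "letter_perm p (w ! j) (Suc j) = j" if "j < length w" for j
    using p_path[OF that, of "fst (w ! j)"] permutes_inv_eq[OF p]
    by (cases "w ! j") (auto simp: letter_perm_def)
  with p show thesis by (rule that)
qed

lemma ex_fixpoint_free_perms_reduced:
  assumes "reduced w" "w \<noteq> []"
  obtains N and P :: "'a \<Rightarrow> nat \<Rightarrow> nat"
  where "N \<ge> 1" "\<And>g. P g permutes {0..<N}" "\<And>i. i < N \<Longrightarrow> word_perm P w i \<noteq> i"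
proof -
  obtain p :: "'a \<Rightarrow> nat \<Rightarrow> nat" where p: "\<And>g. p g permutes {0..length w}"
    and "\<And>j. j < length w \<Longrightarrow> letter_perm p (w ! j) (Suc j) = j"
    using ex_path_perms[OF assms(1)] by blast
  then have "word_perm p w (length w + 0) = 0" by (intro word_perm_walk_down) simp
  then have "word_perm p w (length w) \<noteq> length w" using assms(2) by simp
  then show thesis
    using ex_fixpoint_free_perms[where q = p, OF p] that by blast
qed

lemma free_group_mult: "u \<otimes>\<^bsub>free_group B\<^esub> v = reduce (u @ v)"
  by (simp add: free_group_def)

lemma free_group_one: "\<one>\<^bsub>free_group B\<^esub> = []"
  by (simp add: free_group_def)

lemma mem_carrier_free_group: "w \<in> carrier (free_group B) \<longleftrightarrow> fst ` set w \<subseteq> B \<and> reduced w"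
  by (simp add: free_group_def)

lemma reduce_reduced: "reduced w \<Longrightarrow> reduce w = w"
proof (induction w)
  case (Cons a w)
  then have "reduce (a # w) = red_cons a w" by (simp add: reduce_def reduced_ConsD)
  also have "\<dots> = a # w" using Cons.prems by (cases w) auto
  finally show ?case .
qed (simp add: reduce_def)

(* free_group B is not shown to be a group, so hom_one does not apply. *)
lemma hom_free_group_Nil:
  assumes "h \<in> hom (free_group B) H" "group H"
  shows "h [] = \<one>\<^bsub>H\<^esub>"
proof -
  have Nil: "[] \<in> carrier (free_group B)" by (simp add: mem_carrier_free_group)
  have "h [] = h ([] \<otimes>\<^bsub>free_group B\<^esub> [])" by (simp add: free_group_mult reduce_def)
  also have "\<dots> = h [] \<otimes>\<^bsub>H\<^esub> h []" using hom_mult[OF assms(1) Nil Nil] .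
  finally show ?thesis
    using group.l_cancel_one'[OF assms(2) hom_in_carrier[OF assms(1) Nil] hom_in_carrier[OF assms(1) Nil]]
    by simp
qed

lemma sym_hom_word_perm:
  assumes P: "\<And>g. P g permutes \<Omega>" and "finite \<Omega>"
  shows "sym_hom B \<Omega> (\<lambda>r. restrict (word_perm P r) \<Omega>)"
proof -
  have perm: "word_perm P r permutes \<Omega>" for r by (rule word_perm_permutes[where p = P, OF P])
  have Bij: "restrict (word_perm P r) \<Omega> \<in> carrier (BijGroup \<Omega>)" for r
    using permutes_imp_bij[OF perm[of r]]
    by (auto simp: BijGroup_def Bij_def intro: bij_betw_cong[THEN iffD1, rotated])
  have "restrict (word_perm P (u \<otimes>\<^bsub>free_group B\<^esub> v)) \<Omega> =
      restrict (word_perm P u) \<Omega> \<otimes>\<^bsub>BijGroup \<Omega>\<^esub> restrict (word_perm P v) \<Omega>" for u v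
    using Bij permutes_in_image[OF perm[of v]] permutes_bij[OF P]
    by (auto simp: free_group_mult word_perm_reduce word_perm_append BijGroup_def compose_def)
  then show ?thesis using Bij \<open>finite \<Omega>\<close> by (auto simp: sym_hom_def intro: homI)
qed

lemma hom_BijGroup_bij_betw:
  "h \<in> hom (free_group B) (BijGroup \<Omega>) \<Longrightarrow> r \<in> carrier (free_group B) \<Longrightarrow> bij_betw (h r) \<Omega> \<Omega>"
  using hom_in_carrier by (fastforce simp: BijGroup_def Bij_def)

lemma hom_BijGroup_mult_apply:
  assumes h: "h \<in> hom (free_group B) (BijGroup \<Omega>)"
    and "u \<in> carrier (free_group B)" "v \<in> carrier (free_group B)" "x \<in> \<Omega>"
  shows "h (u \<otimes>\<^bsub>free_group B\<^esub> v) x = h u (h v x)"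
  using hom_mult[OF h assms(2,3)] hom_in_carrier[OF h] assms(2-4)
  by (simp add: BijGroup_def compose_def)

lemma hom_BijGroup_Cons:
  assumes h: "h \<in> hom (free_group B) (BijGroup \<Omega>)"
    and "l # u \<in> carrier (free_group B)" "x \<in> \<Omega>"
  shows "h (l # u) x = h [l] (h u x)"
proof -
  have "[l] \<in> carrier (free_group B)" "u \<in> carrier (free_group B)"
    using assms(2) by (auto simp: mem_carrier_free_group dest: reduced_ConsD)
  moreover have "[l] \<otimes>\<^bsub>free_group B\<^esub> u = l # u"
    using assms(2) by (simp add: free_group_mult mem_carrier_free_group reduce_reduced)
  ultimately show ?thesis using hom_BijGroup_mult_apply[OF h _ _ assms(3)] by metis
qed

lemma hom_BijGroup_cancel_letter:
  assumes h: "h \<in> hom (free_group B) (BijGroup \<Omega>)" and "g \<in> B" "x \<in> \<Omega>"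
  shows "h [(g, \<not> b)] (h [(g, b)] x) = x"
proof -
  have "[(g, c)] \<in> carrier (free_group B)" for c using \<open>g \<in> B\<close> by (simp add: mem_carrier_free_group)
  then have "h [(g, \<not> b)] (h [(g, b)] x) = h ([(g, \<not> b)] \<otimes>\<^bsub>free_group B\<^esub> [(g, b)]) x"
    using hom_BijGroup_mult_apply[OF h _ _ assms(3)] by metis
  also have "\<dots> = h [] x" by (simp add: free_group_mult reduce_def)
  also have "\<dots> = x"
    using hom_free_group_Nil[OF h group_BijGroup] assms(3) by (simp add: BijGroup_def)
  finally show ?thesis .
qed

section \<open>The normalized Hamming distance\<close>

lemma hdist_cong:
  "(\<And>x. x \<in> \<Omega> \<Longrightarrow> \<sigma> x = \<sigma>' x) \<Longrightarrow> (\<And>x. x \<in> \<Omega> \<Longrightarrow> \<tau> x = \<tau>' x) \<Longrightarrow> hdist \<Omega> \<sigma> \<tau> = hdist \<Omega> \<sigma>' \<tau>'"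
  unfolding hdist_def by (metis (mono_tags, lifting) Collect_cong)

lemma hdist_comp_le:
  assumes "finite \<Omega>" "inj_on \<tau>' \<Omega>" "\<tau>' ` \<Omega> \<subseteq> \<Omega>"
  shows "hdist \<Omega> (\<sigma> \<circ> \<sigma>') (\<tau> \<circ> \<tau>') \<le> hdist \<Omega> \<sigma> \<tau> + hdist \<Omega> \<sigma>' \<tau>'"
proof -
  let ?D = "\<lambda>\<sigma> \<tau>. {x \<in> \<Omega>. \<sigma> x \<noteq> \<tau> x}"
  have "?D (\<sigma> \<circ> \<sigma>') (\<tau> \<circ> \<tau>') \<subseteq> ?D (\<sigma> \<circ> \<tau>') (\<tau> \<circ> \<tau>') \<union> ?D \<sigma>' \<tau>'"
    by auto
  then have "card (?D (\<sigma> \<circ> \<sigma>') (\<tau> \<circ> \<tau>')) \<le> card (?D (\<sigma> \<circ> \<tau>') (\<tau> \<circ> \<tau>') \<union> ?D \<sigma>' \<tau>')"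
    using \<open>finite \<Omega>\<close> by (intro card_mono) auto
  also have "\<dots> \<le> card (?D (\<sigma> \<circ> \<tau>') (\<tau> \<circ> \<tau>')) + card (?D \<sigma>' \<tau>')"
    by (rule card_Un_le)
  also have "card (?D (\<sigma> \<circ> \<tau>') (\<tau> \<circ> \<tau>')) \<le> card (?D \<sigma> \<tau>)"
    by (rule card_inj_on_le[where f = \<tau>']) (use assms in \<open>auto intro: inj_on_subset\<close>)
  finally show ?thesis
    unfolding hdist_def by (simp add: add_divide_distrib[symmetric] divide_right_mono)
qed

lemma hdist_inverse_le:
  assumes "finite \<Omega>" "inj_on \<tau>' \<Omega>" "\<tau>' ` \<Omega> \<subseteq> \<Omega>"
    and "\<And>x. x \<in> \<Omega> \<Longrightarrow> \<sigma>' (\<sigma> x) = x" "\<And>y. y \<in> \<Omega> \<Longrightarrow> \<tau> (\<tau>' y) = y"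
  shows "hdist \<Omega> \<sigma>' \<tau>' \<le> hdist \<Omega> \<sigma> \<tau>"
proof -
  have "\<tau>' ` {y \<in> \<Omega>. \<sigma>' y \<noteq> \<tau>' y} \<subseteq> {x \<in> \<Omega>. \<sigma> x \<noteq> \<tau> x}"
    using assms(3-5) by force
  then have "card {y \<in> \<Omega>. \<sigma>' y \<noteq> \<tau>' y} \<le> card {x \<in> \<Omega>. \<sigma> x \<noteq> \<tau> x}"
    using assms(1,2) by (intro card_inj_on_le[where f = \<tau>']) (auto intro: inj_on_subset)
  then show ?thesis unfolding hdist_def by (simp add: divide_right_mono)
qed

lemma hdist_hom_letter:
  assumes h\<^sub>1: "h\<^sub>1 \<in> hom (free_group B) (BijGroup \<Omega>)" and h\<^sub>2: "h\<^sub>2 \<in> hom (free_group B) (BijGroup \<Omega>)"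
    and "finite \<Omega>" "g \<in> B"
  shows "hdist \<Omega> (h\<^sub>1 [(g, b)]) (h\<^sub>2 [(g, b)]) = hdist \<Omega> (h\<^sub>1 (gen g)) (h\<^sub>2 (gen g))"
proof -
  have "hdist \<Omega> (h\<^sub>1 [(g, \<not> c)]) (h\<^sub>2 [(g, \<not> c)]) \<le> hdist \<Omega> (h\<^sub>1 [(g, c)]) (h\<^sub>2 [(g, c)])" for c
  proof (rule hdist_inverse_le)
    have "bij_betw (h\<^sub>2 [(g, \<not> c)]) \<Omega> \<Omega>"
      using \<open>g \<in> B\<close> by (intro hom_BijGroup_bij_betw[OF h\<^sub>2]) (simp add: mem_carrier_free_group)
    then show "inj_on (h\<^sub>2 [(g, \<not> c)]) \<Omega>" "h\<^sub>2 [(g, \<not> c)] ` \<Omega> \<subseteq> \<Omega>"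
      by (auto simp: bij_betw_def)
    show "h\<^sub>2 [(g, c)] (h\<^sub>2 [(g, \<not> c)] y) = y" if "y \<in> \<Omega>" for y
      using hom_BijGroup_cancel_letter[OF h\<^sub>2 \<open>g \<in> B\<close> that, of "\<not> c"] by simp
  qed (use \<open>finite \<Omega>\<close> hom_BijGroup_cancel_letter[OF h\<^sub>1 \<open>g \<in> B\<close>] in auto)
  from this[of True] this[of False] show ?thesis
    by (cases b) (auto simp: gen_def)
qed

lemma hdist_hom_word_le:
  assumes h\<^sub>1: "h\<^sub>1 \<in> hom (free_group B) (BijGroup \<Omega>)" and h\<^sub>2: "h\<^sub>2 \<in> hom (free_group B) (BijGroup \<Omega>)"
    and "finite \<Omega>"
  shows "w \<in> carrier (free_group B) \<Longrightarrow>
    hdist \<Omega> (h\<^sub>1 w) (h\<^sub>2 w) \<le> (\<Sum>l\<leftarrow>w. hdist \<Omega> (h\<^sub>1 (gen (fst l))) (h\<^sub>2 (gen (fst l))))"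
proof (induction w)
  case Nil
  then show ?case
    using hom_free_group_Nil[OF h\<^sub>1 group_BijGroup] hom_free_group_Nil[OF h\<^sub>2 group_BijGroup]
    by (simp add: hdist_def)
next
  case (Cons l u)
  have u: "u \<in> carrier (free_group B)" and l: "[l] \<in> carrier (free_group B)" "fst l \<in> B"
    using Cons.prems by (auto simp: mem_carrier_free_group dest: reduced_ConsD)
  have "hdist \<Omega> (h\<^sub>1 (l # u)) (h\<^sub>2 (l # u)) = hdist \<Omega> (h\<^sub>1 [l] \<circ> h\<^sub>1 u) (h\<^sub>2 [l] \<circ> h\<^sub>2 u)"
    using hom_BijGroup_Cons[OF h\<^sub>1 Cons.prems] hom_BijGroup_Cons[OF h\<^sub>2 Cons.prems]
    by (intro hdist_cong) simp_all
  also have "\<dots> \<le> hdist \<Omega> (h\<^sub>1 [l]) (h\<^sub>2 [l]) + hdist \<Omega> (h\<^sub>1 u) (h\<^sub>2 u)"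
    using hom_BijGroup_bij_betw[OF h\<^sub>2 u] \<open>finite \<Omega>\<close>
    by (intro hdist_comp_le) (auto simp: bij_betw_def)
  also have "hdist \<Omega> (h\<^sub>1 [l]) (h\<^sub>2 [l]) = hdist \<Omega> (h\<^sub>1 (gen (fst l))) (h\<^sub>2 (gen (fst l)))"
    using hdist_hom_letter[OF h\<^sub>1 h\<^sub>2 \<open>finite \<Omega>\<close> l(2), of "snd l"] by simp
  finally show ?case using Cons.IH[OF u] by simp
qed

lemma hdist_close_hom_word_less:
  assumes "sym_hom B \<Omega> \<phi>" "sym_hom B \<Omega> \<psi>" "eps_close B \<Omega> \<epsilon> \<psi> \<phi>"
    and "w \<in> carrier (free_group B)" "w \<noteq> []"
  shows "hdist \<Omega> (\<psi> w) (\<phi> w) < real (length w) * \<epsilon>"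
proof -
  have "hdist \<Omega> (\<psi> w) (\<phi> w) \<le> (\<Sum>l\<leftarrow>w. hdist \<Omega> (\<psi> (gen (fst l))) (\<phi> (gen (fst l))))"
    using assms(1,2,4) by (intro hdist_hom_word_le) (auto simp: sym_hom_def)
  also have "\<dots> < (\<Sum>l\<leftarrow>w. \<epsilon>)"
    using assms(3-5) by (intro sum_list_strict_mono) (auto simp: eps_close_def mem_carrier_free_group)
  finally show ?thesis by (simp add: sum_list_triv)
qed

lemma hdist_word_perm_one_le:
  assumes "\<And>g. P g permutes {0..<N}"
  shows "hdist {0..<n} (restrict (word_perm P r) {0..<n}) \<one>\<^bsub>BijGroup {0..<n}\<^esub> \<le> real N / real n"
proof -
  have "{x \<in> {0..<n}. restrict (word_perm P r) {0..<n} x \<noteq> \<one>\<^bsub>BijGroup {0..<n}\<^esub> x} \<subseteq> {0..<N}"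
    using permutes_not_in[OF word_perm_permutes[where p = P, OF assms]] by (fastforce simp: BijGroup_def)
  then have "card {x \<in> {0..<n}. restrict (word_perm P r) {0..<n} x \<noteq> \<one>\<^bsub>BijGroup {0..<n}\<^esub> x} \<le> N"
    using card_mono[of "{0..<N}"] by fastforce
  then show ?thesis unfolding hdist_def by (simp add: divide_right_mono)
qed

section \<open>Almost-solutions far from solutions\<close>

lemma word_perm_far_from_solutions:
  assumes P: "\<And>g. P g permutes {0..<N}" and "1 \<le> N" "N \<le> n"
    and fixpoint_free: "\<And>i. i < N \<Longrightarrow> word_perm P w i \<noteq> i"
    and w: "w \<in> K" "w \<in> carrier (free_group B)" "w \<noteq> []"
    and "real (length w) * \<epsilon> * real n \<le> real N"
  shows "\<not> (\<exists>\<psi>. sym_hom B {0..<n} \<psi> \<and> is_solution B {0..<n} K \<psi> \<and>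
            eps_close B {0..<n} \<epsilon> \<psi> (\<lambda>r. restrict (word_perm P r) {0..<n}))"
proof
  let ?\<phi> = "\<lambda>r. restrict (word_perm P r) {0..<n}"
  assume "\<exists>\<psi>. sym_hom B {0..<n} \<psi> \<and> is_solution B {0..<n} K \<psi> \<and> eps_close B {0..<n} \<epsilon> \<psi> ?\<phi>"
  then obtain \<psi> where \<psi>: "sym_hom B {0..<n} \<psi>" "eps_close B {0..<n} \<epsilon> \<psi> ?\<phi>"
    and "\<psi> w = \<one>\<^bsub>BijGroup {0..<n}\<^esub>"
    using w(1) by (auto simp: is_solution_def kernel_def)
  then have "{0..<N} \<subseteq> {x \<in> {0..<n}. \<psi> w x \<noteq> ?\<phi> w x}"
    using fixpoint_free \<open>N \<le> n\<close> by (force simp: BijGroup_def)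
  then have "card {0..<N} \<le> card {x \<in> {0..<n}. \<psi> w x \<noteq> ?\<phi> w x}"
    by (intro card_mono) auto
  then have "real N / real n \<le> hdist {0..<n} (\<psi> w) (?\<phi> w)"
    unfolding hdist_def by (simp add: divide_right_mono)
  also have "\<dots> < real (length w) * \<epsilon>"
  proof (rule hdist_close_hom_word_less[OF _ \<psi> w(2,3)])
    show "sym_hom B {0..<n} ?\<phi>"
      using permutes_subset[OF P] \<open>N \<le> n\<close> by (intro sym_hom_word_perm) auto
  qed
  finally show False
    using assms(2,3) \<open>real (length w) * \<epsilon> * real n \<le> real N\<close> by (simp add: divide_less_eq)
qed

lemma ex_nat_ratio_bounds:
  fixes A :: real
  assumes "0 < A" "A \<le> 1/2" "1 \<le> N"
  obtains n :: nat where "N \<le> n" "A * real n \<le> real N" "real N / real n < 2 * A"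
proof
  define n where "n = nat \<lfloor>real N / A\<rfloor>"
  have "real N \<le> real N / A" using assms by (simp add: le_divide_eq)
  then have "int N \<le> \<lfloor>real N / A\<rfloor>" by (simp add: le_floor_iff)
  then have n: "real n \<le> real N / A" "real N / A < real n + 1" "real N \<le> real n"
    by (simp_all add: n_def) linarith+
  then show "N \<le> n" by simp
  show "A * real n \<le> real N" using n(1) \<open>0 < A\<close> by (simp add: le_divide_eq mult.commute)
  have "1 \<le> real N / (2 * A)" using assms by (simp add: le_divide_eq)
  then have "real N < 2 * A * real n" using n(2) \<open>0 < A\<close> by (simp add: field_simps)
  then show "real N / real n < 2 * A" using n(3) assms(3) by (simp add: divide_less_eq)
qed

(* Pad a fixed-point-free action of w on N points with fixed points up to about N / (|w| eps). *)
lemma ex_almost_solution_far_from_solutions: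
  assumes w: "w \<in> K" "w \<in> carrier (free_group B)" "w \<noteq> []"
    and "0 < \<epsilon>" "real (length w) * \<epsilon> \<le> 1/2"
  obtains \<Omega> \<phi> where "sym_hom B \<Omega> \<phi>"
    and "\<And>r. hdist \<Omega> (\<phi> r) \<one>\<^bsub>BijGroup \<Omega>\<^esub> < 2 * real (length w) * \<epsilon>"
    and "\<not> (\<exists>\<psi>. sym_hom B \<Omega> \<psi> \<and> is_solution B \<Omega> K \<psi> \<and> eps_close B \<Omega> \<epsilon> \<psi> \<phi>)"
proof -
  have "reduced w" using w(2) by (simp add: mem_carrier_free_group)
  then obtain N and P :: "'a \<Rightarrow> nat \<Rightarrow> nat" where N: "1 \<le> N" and P: "\<And>g. P g permutes {0..<N}"
    and fixpoint_free: "\<And>i. i < N \<Longrightarrow> word_perm P w i \<noteq> i"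
    using ex_fixpoint_free_perms_reduced[OF \<open>reduced w\<close> w(3)] by blast
  have "0 < real (length w) * \<epsilon>" using w(3) \<open>0 < \<epsilon>\<close> by simp
  then obtain n where n: "N \<le> n" "real (length w) * \<epsilon> * real n \<le> real N"
    and ratio: "real N / real n < 2 * (real (length w) * \<epsilon>)"
    using ex_nat_ratio_bounds[OF _ \<open>real (length w) * \<epsilon> \<le> 1/2\<close> N] by blast
  show thesis
  proof
    show "sym_hom B {0..<n} (\<lambda>r. restrict (word_perm P r) {0..<n})"
      using permutes_subset[OF P] \<open>N \<le> n\<close> by (intro sym_hom_word_perm) auto
    show "hdist {0..<n} (restrict (word_perm P r) {0..<n}) \<one>\<^bsub>BijGroup {0..<n}\<^esub> < 2 * real (length w) * \<epsilon>"
      for r using hdist_word_perm_one_le[where P = P and n = n and r = r, OF P] ratio by simp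
  qed (rule word_perm_far_from_solutions[OF P N n(1) fixpoint_free w n(2)])
qed

lemma stab_property_delta_le:
  assumes "w \<in> K" "w \<in> carrier (free_group B)" "w \<noteq> []"
    and "0 < \<epsilon>" "real (length w) * \<epsilon> \<le> 1/2"
    and "stab_property B K \<epsilon> \<delta> E"
  shows "\<delta> \<le> 2 * real (length w) * \<epsilon>"
proof (rule ccontr)
  assume "\<not> \<delta> \<le> 2 * real (length w) * \<epsilon>"
  obtain \<Omega> \<phi> where \<phi>: "sym_hom B \<Omega> \<phi>"
    and close_to_one: "\<And>r. hdist \<Omega> (\<phi> r) \<one>\<^bsub>BijGroup \<Omega>\<^esub> < 2 * real (length w) * \<epsilon>"
    and far: "\<not> (\<exists>\<psi>. sym_hom B \<Omega> \<psi> \<and> is_solution B \<Omega> K \<psi> \<and> eps_close B \<Omega> \<epsilon> \<psi> \<phi>)"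
    using ex_almost_solution_far_from_solutions[OF assms(1-5)] by blast
  have "almost_solution B \<Omega> \<delta> E \<phi>"
    unfolding almost_solution_def
    using close_to_one \<open>\<not> \<delta> \<le> 2 * real (length w) * \<epsilon>\<close> by (meson less_le_trans nle_le)
  then show False
    using \<open>stab_property B K \<epsilon> \<delta> E\<close> \<phi> far by (auto simp: stab_property_def)
qed

lemma not_stab_property_trivial:
  assumes "w \<in> K" "w \<in> carrier (free_group B)" "w \<noteq> []"
    and "0 < \<epsilon>" "real (length w) * \<epsilon> \<le> 1/2"
    and "E \<subseteq> {[]}" "0 < \<delta>"
  shows "\<not> stab_property B K \<epsilon> \<delta> E"
proof
  assume stab: "stab_property B K \<epsilon> \<delta> E"
  obtain \<Omega> \<phi> where \<phi>: "sym_hom B \<Omega> \<phi>"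
    and "\<And>r. hdist \<Omega> (\<phi> r) \<one>\<^bsub>BijGroup \<Omega>\<^esub> < 2 * real (length w) * \<epsilon>"
    and far: "\<not> (\<exists>\<psi>. sym_hom B \<Omega> \<psi> \<and> is_solution B \<Omega> K \<psi> \<and> eps_close B \<Omega> \<epsilon> \<psi> \<phi>)"
    using ex_almost_solution_far_from_solutions[OF assms(1-5)] by blast
  have "\<phi> \<in> hom (free_group B) (BijGroup \<Omega>)" using \<phi> by (simp add: sym_hom_def)
  then have "\<phi> [] = \<one>\<^bsub>BijGroup \<Omega>\<^esub>" by (rule hom_free_group_Nil[OF _ group_BijGroup])
  then have "almost_solution B \<Omega> \<delta> E \<phi>"
    using assms(6,7) by (auto simp: almost_solution_def hdist_def)
  then show False using stab \<phi> far by (auto simp: stab_property_def)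
qed

(* Some relator in E is nontrivial: if it is short, it bounds delta as in (i);
   otherwise its length alone exceeds x / 2. *)
lemma valid_pair_ratio_ge:
  assumes w\<^sub>0: "w\<^sub>0 \<in> K" "w\<^sub>0 \<noteq> []" and K: "K \<subseteq> carrier (free_group B)"
    and x: "2 * real (length w\<^sub>0) \<le> x" and valid: "valid_pair B K (1 / x) \<delta> E"
  shows "x / 2 \<le> word_norm E / \<delta>"
proof -
  have \<delta>: "0 < \<delta>" "\<delta> \<le> 1" and "finite E" "E \<subseteq> K" and stab: "stab_property B K (1 / x) \<delta> E"
    using valid by (auto simp: valid_pair_def)
  have "0 < real (length w\<^sub>0)" using w\<^sub>0(2) by simp
  with x have "0 < x" by linarith
  have "\<not> E \<subseteq> {[]}"
    using not_stab_property_trivial[of w\<^sub>0 K B "1 / x" E \<delta>] w\<^sub>0 K x \<open>0 < x\<close> \<delta>(1) stab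
    by (auto simp: field_simps)
  then obtain w where "w \<in> E" "w \<noteq> []" by blast
  then have w: "w \<in> K" "w \<in> carrier (free_group B)" using \<open>E \<subseteq> K\<close> K by auto
  have w_le: "real (length w) \<le> word_norm E"
    unfolding word_norm_def using \<open>finite E\<close> \<open>w \<in> E\<close> by (intro member_le_sum) auto
  show ?thesis
  proof (cases "real (length w) * (1 / x) \<le> 1/2")
    case True
    then have "\<delta> \<le> 2 * real (length w) * (1 / x)"
      using stab_property_delta_le[OF w \<open>w \<noteq> []\<close> _ True stab] \<open>0 < x\<close> by simp
    then show ?thesis
      using w_le \<open>0 < x\<close> \<delta>(1) by (simp add: field_simps)
  next
    case False
    then have "x / 2 < word_norm E" using w_le \<open>0 < x\<close> by (simp add: field_simps)
    also have "word_norm E \<le> word_norm E / \<delta>"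
      using \<delta> w_le by (simp add: le_divide_eq mult_left_le)
    finally show ?thesis by simp
  qed
qed

lemma stability_function_ge:
  assumes "stable B K" "w\<^sub>0 \<in> K" "w\<^sub>0 \<noteq> []" "K \<subseteq> carrier (free_group B)"
    and "2 * real (length w\<^sub>0) \<le> x"
  shows "x / 2 \<le> stability_function B K x"
  unfolding stability_function_def
proof (rule cInf_greatest)
  have "0 < real (length w\<^sub>0)" using assms(3) by simp
  with assms(5) have "0 < x" by linarith
  then show "{word_norm E / \<delta> | \<delta> E. valid_pair B K (1 / x) \<delta> E} \<noteq> {}"
    using \<open>stable B K\<close> by (auto simp: stable_def)
qed (use valid_pair_ratio_ge[OF assms(2-5)] in blast)

theorem proposition2p3:
  fixes B :: "'a set" and G :: "('g, 'm) monoid_scheme" and \<pi> :: "('a \<times> bool) list \<Rightarrow> 'g"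
  assumes "finite B"
    and "group G"
    and "\<pi> \<in> hom (free_group B) G"
    and "\<pi> ` carrier (free_group B) = carrier G"
    and "stable B (kernel (free_group B) G \<pi>)"
    and "kernel (free_group B) G \<pi> \<noteq> {\<one>\<^bsub>free_group B\<^esub>}"
  shows "\<exists>C1 C2. C1 > 0 \<and> C2 > 0 \<and> (\<forall>x::real. x \<ge> C1 \<longrightarrow>
           (\<forall>\<delta>::real. \<delta> > 0 \<and>
               (\<exists>E. finite E \<and> E \<subseteq> kernel (free_group B) G \<pi> \<and>
                    stab_property B (kernel (free_group B) G \<pi>) (1 / x) \<delta> E)
               \<longrightarrow> \<delta> \<le> C2 / x) \<and>
           stability_function B (kernel (free_group B) G \<pi>) x \<ge> x / 4)"
proof -
  define K where "K = kernel (free_group B) G \<pi>"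
  have K: "K \<subseteq> carrier (free_group B)" by (auto simp: K_def kernel_def)
  have "[] \<in> K"
    using hom_free_group_Nil[OF assms(3,2)] by (simp add: K_def kernel_def mem_carrier_free_group)
  then obtain w\<^sub>0 where w\<^sub>0: "w\<^sub>0 \<in> K" "w\<^sub>0 \<noteq> []"
    using assms(6) by (auto simp: K_def free_group_one)
  define C where "C = 2 * real (length w\<^sub>0)"
  have "0 < C" using w\<^sub>0(2) by (simp add: C_def)
  moreover have "\<delta> \<le> C / x" if "C \<le> x" "stab_property B K (1 / x) \<delta> E" for x \<delta> E
  proof -
    have "0 < x" using that(1) \<open>0 < C\<close> by linarith
    then have "\<delta> \<le> 2 * real (length w\<^sub>0) * (1 / x)"
      using w\<^sub>0 K that by (intro stab_property_delta_le) (auto simp: C_def field_simps)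
    then show ?thesis by (simp add: C_def)
  qed
  moreover have "x / 4 \<le> stability_function B K x" if "C \<le> x" for x
    using stability_function_ge[OF assms(5)[folded K_def] w\<^sub>0 K] that \<open>0 < C\<close>
    by (fastforce simp: C_def)
  ultimately show ?thesis unfolding K_def[symmetric] by blast
qed

end
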